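(* Let $f:\mathbb{R}^n\to\mathbb{R}$ be twice continuously differentiable with Lipschitz continuous Hessian $\nabla^2 f$, let $x\in\mathbb{R}^n$ with $\nabla^2 f(x)$ invertible, and let $y^1,\dots,y^p\in\mathbb{R}^n$ with $p\ge n$. Set $z^\ell=\nabla^2 f(x)(y^\ell-x)$, $\Delta_y=\max_{1\le\ell\le p}\|y^\ell-x\|$, $\Delta_z=\max_{1\le\ell\le p}\|z^\ell\|$, and let $M_L^z$ be the $p\times n$ matrix with rows $(1/\Delta_z)(z^\ell)^\top$, $\ell=1,\dots,p$. Suppose $M_L^z$ has full column rank, and let $\Lambda_z$ be a bound on the norm of the left inverse of $M_L^z$. If $d^N\in\mathbb{R}^n$ satisfies $$(z^\ell)^\top d^N=-f(y^\ell)+f(x)+\tfrac12 (y^\ell-x)^\top z^\ell,\qquad \ell=1,\dots,p,$$ (in the least-squares sense when $p>n$), then $$\left\|-\nabla^2 f(x)^{-1}\nabla f(x)-d^N\right\|\le \Lambda_z\,\mathcal{O}\!\left(\frac{\Delta_y^3}{\Delta_z}\right),$$ where the multiplicative constant in $\mathcal{O}$ depends on the Lipschitz constant of $\nabla^2 f$.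
   Context: $\mathcal{O}(A)$ denotes a constant times $A$, where the constant is independent of $A$. Norms are Euclidean. *)

theory Defs
  imports "HOL-Analysis.Analysis"
begin

definition left_inverse :: "real^'n^'p \<Rightarrow> real^'p^'n" where
  "left_inverse M = matrix_inv (transpose M ** M) ** transpose M"

definition mat_norm :: "real^'n^'m \<Rightarrow> real" where
  "mat_norm A = onorm (\<lambda>v. A *v v)"

end

theory Submission
  imports Defs
begin

text \<open>Let \<open>d\<^sup>* = - H(x)\<^sup>-\<^sup>1 g(x)\<close> be the Newton step. Since the Hessian is symmetric,
  \<open>(z\<^sup>l)\<^sup>T d\<^sup>* = - g(x)\<^sup>T (y\<^sup>l - x)\<close>, so \<open>d\<^sup>*\<close> satisfies the interpolation equations up to the
  residuals \<open>f(y\<^sup>l) - f(x) - g(x)\<^sup>T h - h\<^sup>T H(x) h / 2\<close> with \<open>h = y\<^sup>l - x\<close>, which are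
  \<open>O(L \<Delta>y\<^sup>3)\<close> by Taylor's theorem for a Lipschitz Hessian. As \<open>d\<^sup>N\<close> minimises the residual,
  \<open>\<parallel>Z (d\<^sup>* - d\<^sup>N)\<parallel>\<close> is at most twice the residual of \<open>d\<^sup>*\<close>; dividing by \<open>\<Delta>z\<close> and applying
  the left inverse of \<open>M = Z / \<Delta>z\<close> gives the bound. Symmetry of the Hessian itself comes
  from the mixed second difference of \<open>f\<close>, which is symmetric in its two increments
  and equals \<open>s\<^sup>2 (H(x) u)\<^sup>T v + O(s\<^sup>3)\<close> for increments \<open>s u\<close>, \<open>s v\<close>.\<close>

lemma mat_norm_nonneg: "0 \<le> mat_norm A"
  unfolding mat_norm_def by (rule onorm_pos_le) simp

lemma norm_matrix_vector_le: "norm (A *v v) \<le> mat_norm A * norm v"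
  unfolding mat_norm_def by (rule onorm) simp

lemma abs_inner_matrix_vector_le: "\<bar>(A *v u) \<bullet> v\<bar> \<le> mat_norm A * norm u * norm v"
proof -
  have "\<bar>(A *v u) \<bullet> v\<bar> \<le> norm (A *v u) * norm v" by (rule Cauchy_Schwarz_ineq2)
  also have "\<dots> \<le> mat_norm A * norm u * norm v"
    by (intro mult_right_mono norm_matrix_vector_le) simp
  finally show ?thesis .
qed

lemma invertible_matrix_inv:
  fixes A :: "real^'n^'n"
  assumes "invertible A"
  shows matrix_mul_matrix_inv: "A ** matrix_inv A = mat 1"
    and matrix_inv_mul: "matrix_inv A ** A = mat 1"
  using assms unfolding invertible_def matrix_inv_def by (metis (mono_tags, lifting) someI_ex)+

lemma left_inverse_mul_full_rank:
  fixes M :: "real^'n^'p"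
  assumes "rank M = CARD('n)"
  shows "left_inverse M ** M = mat 1"
proof -
  have "x = 0" if "(transpose M ** M) *v x = 0" for x
  proof -
    have "(M *v x) \<bullet> (M *v x) = x \<bullet> (transpose M *v (M *v x))"
      by (metis dot_lmul_matrix inner_commute transpose_matrix_vector)
    also have "\<dots> = 0" using that by (simp add: matrix_vector_mul_assoc)
    finally show "x = 0"
      using assms full_rank_injective[of M] by (simp add: inj_on_def)
  qed
  then have "invertible (transpose M ** M)"
    using matrix_left_invertible_ker invertible_left_inverse by blast
  then show ?thesis
    unfolding left_inverse_def by (simp add: matrix_mul_assoc[symmetric] matrix_inv_mul)
qed

lemma least_squares_error_le:
  fixes Z :: "real^'n^'p"
  assumes "rank Z = CARD('n)" and "\<forall>d. norm (Z *v dN - b) \<le> norm (Z *v d - b)"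
  shows "norm (d - dN) \<le> 2 * mat_norm (left_inverse Z) * norm (Z *v d - b)"
proof -
  have "norm (d - dN) = norm (left_inverse Z *v (Z *v (d - dN)))"
    by (simp add: matrix_vector_mul_assoc left_inverse_mul_full_rank[OF assms(1)])
  also have "\<dots> \<le> mat_norm (left_inverse Z) * norm (Z *v (d - dN))"
    by (rule norm_matrix_vector_le)
  also have "\<dots> \<le> mat_norm (left_inverse Z) * (2 * norm (Z *v d - b))"
    using norm_triangle_ineq4[of "Z *v d - b" "Z *v dN - b"] assms(2)[rule_format, of d]
    unfolding matrix_vector_mult_diff_distrib
    by (intro mult_left_mono mat_norm_nonneg) auto
  finally show ?thesis by simp
qed

lemma norm_le_card_mult_cart:
  fixes x :: "real^'i"
  assumes "\<And>i. \<bar>x $ i\<bar> \<le> c"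
  shows "norm x \<le> real CARD('i) * c"
proof -
  have "norm x \<le> (\<Sum>i\<in>UNIV. \<bar>x $ i\<bar>)"
    by (rule norm_le_l1_cart)
  also have "\<dots> \<le> real CARD('i) * c"
    using sum_bounded_above[of UNIV "\<lambda>i. \<bar>x $ i\<bar>" c] assms by simp
  finally show ?thesis .
qed

lemma lipschitz_hessian_const_nonneg:
  fixes H :: "real^'n \<Rightarrow> real^'m^'k"
  assumes "\<forall>u v. mat_norm (H u - H v) \<le> L * norm (u - v)"
  shows "0 \<le> L"
  using order_trans[OF mat_norm_nonneg assms[rule_format, of "axis undefined 1" 0]] by simp

lemma has_real_derivative_along_line:
  fixes f :: "'a::real_inner \<Rightarrow> real"
  assumes "\<forall>u. (f has_derivative (\<lambda>h. g u \<bullet> h)) (at u)"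
  shows "((\<lambda>t. f (x + t *\<^sub>R h)) has_real_derivative g (x + t *\<^sub>R h) \<bullet> h) (at t)"
proof -
  have "((\<lambda>t. x + t *\<^sub>R h) has_derivative (\<lambda>s. s *\<^sub>R h)) (at t)"
    by (auto intro!: derivative_eq_intros)
  from has_derivative_compose[OF this assms[rule_format]]
  show ?thesis
    unfolding has_field_derivative_def
    by (rule has_derivative_eq_rhs) (auto simp: o_def fun_eq_iff mult.commute)
qed

lemma has_real_derivative_gradient_inner_along_line:
  fixes g :: "real^'n \<Rightarrow> real^'n" and H :: "real^'n \<Rightarrow> real^'n^'n"
  assumes "\<forall>u. (g has_derivative (\<lambda>h. H u *v h)) (at u)"
  shows "((\<lambda>t. g (x + t *\<^sub>R h) \<bullet> v) has_real_derivative (H (x + t *\<^sub>R h) *v h) \<bullet> v) (at t)"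
proof -
  have "((\<lambda>t. x + t *\<^sub>R h) has_derivative (\<lambda>s. s *\<^sub>R h)) (at t)"
    by (auto intro!: derivative_eq_intros)
  from has_derivative_compose[OF this assms[rule_format]]
  have "((\<lambda>t. g (x + t *\<^sub>R h) \<bullet> v) has_derivative (\<lambda>s. (H (x + t *\<^sub>R h) *v (s *\<^sub>R h)) \<bullet> v)) (at t)"
    by (auto simp: o_def intro!: derivative_eq_intros)
  then show ?thesis
    unfolding has_field_derivative_def
    by (rule has_derivative_eq_rhs) (auto simp: fun_eq_iff matrix_vector_mult_scaleR mult.commute)
qed

lemma lipschitz_hessian_segment_le:
  fixes H :: "real^'n \<Rightarrow> real^'m^'k"
  assumes lip: "\<forall>u v. mat_norm (H u - H v) \<le> L * norm (u - v)"
    and "0 \<le> \<tau>" "\<tau> \<le> 1"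
  shows "mat_norm (H (y + \<tau> *\<^sub>R k) - H y) \<le> L * norm k"
proof -
  have "L * (\<tau> * norm k) \<le> L * norm k"
    using assms(2,3) lipschitz_hessian_const_nonneg[OF lip]
    by (intro mult_left_mono mult_left_le_one_le) auto
  then show ?thesis
    using lip[rule_format, of "y + \<tau> *\<^sub>R k" y] assms(2) by simp
qed

lemma gradient_taylor_lipschitz_hessian:
  fixes g :: "real^'n \<Rightarrow> real^'n" and H :: "real^'n \<Rightarrow> real^'n^'n"
  assumes dg: "\<forall>u. (g has_derivative (\<lambda>h. H u *v h)) (at u)"
    and lip: "\<forall>u v. mat_norm (H u - H v) \<le> L * norm (u - v)"
  shows "\<bar>g (y + k) \<bullet> v - g y \<bullet> v - (H y *v k) \<bullet> v\<bar> \<le> L * norm k ^ 2 * norm v"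
proof -
  define \<phi> where "\<phi> t = g (y + t *\<^sub>R k) \<bullet> v - t * ((H y *v k) \<bullet> v)" for t
  have \<phi>': "(\<phi> has_real_derivative ((H (y + t *\<^sub>R k) - H y) *v k) \<bullet> v) (at t)" for t
    unfolding \<phi>_def matrix_vector_mult_diff_rdistrib inner_diff_left
    by (intro DERIV_diff has_real_derivative_gradient_inner_along_line[OF dg])
       (auto intro!: derivative_eq_intros)
  obtain \<tau> where \<tau>: "0 < \<tau>" "\<tau> < 1" and "\<phi> 1 - \<phi> 0 = ((H (y + \<tau> *\<^sub>R k) - H y) *v k) \<bullet> v"
    using MVT2[of 0 1 \<phi>, OF _ \<phi>'] by auto
  then have "\<bar>g (y + k) \<bullet> v - g y \<bullet> v - (H y *v k) \<bullet> v\<bar>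
      = \<bar>((H (y + \<tau> *\<^sub>R k) - H y) *v k) \<bullet> v\<bar>"
    by (simp add: \<phi>_def algebra_simps)
  also have "\<dots> \<le> mat_norm (H (y + \<tau> *\<^sub>R k) - H y) * norm k * norm v"
    by (rule abs_inner_matrix_vector_le)
  also have "\<dots> \<le> (L * norm k) * norm k * norm v"
    using lipschitz_hessian_segment_le[OF lip, of \<tau>] \<tau> by (intro mult_right_mono) auto
  finally show ?thesis by (simp add: power2_eq_square mult_ac)
qed

lemma second_difference_hessian:
  fixes f :: "real^'n \<Rightarrow> real" and g :: "real^'n \<Rightarrow> real^'n" and H :: "real^'n \<Rightarrow> real^'n^'n"
  assumes df: "\<forall>u. (f has_derivative (\<lambda>h. g u \<bullet> h)) (at u)"
    and dg: "\<forall>u. (g has_derivative (\<lambda>h. H u *v h)) (at u)"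
    and lip: "\<forall>u v. mat_norm (H u - H v) \<le> L * norm (u - v)"
  shows "\<bar>f (x + u + v) - f (x + u) - f (x + v) + f x - (H x *v u) \<bullet> v\<bar>
          \<le> L * (norm u ^ 2 * norm v + norm u * norm v ^ 2)"
proof -
  define \<phi> where "\<phi> t = f (x + u + t *\<^sub>R v) - f (x + t *\<^sub>R v)" for t
  have \<phi>': "(\<phi> has_real_derivative g (x + u + t *\<^sub>R v) \<bullet> v - g (x + t *\<^sub>R v) \<bullet> v) (at t)" for t
    unfolding \<phi>_def by (intro DERIV_diff has_real_derivative_along_line[OF df])
  obtain \<tau> where \<tau>: "0 < \<tau>" "\<tau> < 1"
    and "\<phi> 1 - \<phi> 0 = g (x + u + \<tau> *\<^sub>R v) \<bullet> v - g (x + \<tau> *\<^sub>R v) \<bullet> v"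
    using MVT2[of 0 1 \<phi>, OF _ \<phi>'] by auto
  moreover define y where "y = x + \<tau> *\<^sub>R v"
  ultimately have D: "f (x + u + v) - f (x + u) - f (x + v) + f x = g (y + u) \<bullet> v - g y \<bullet> v"
    by (simp add: \<phi>_def algebra_simps)
  have "\<bar>g (y + u) \<bullet> v - g y \<bullet> v - (H y *v u) \<bullet> v\<bar> \<le> L * norm u ^ 2 * norm v"
    by (rule gradient_taylor_lipschitz_hessian[OF dg lip])
  moreover have "mat_norm (H y - H x) \<le> L * norm v"
    using lipschitz_hessian_segment_le[OF lip, of \<tau> x v] \<tau> by (simp add: y_def)
  then have "\<bar>((H y - H x) *v u) \<bullet> v\<bar> \<le> (L * norm v) * norm u * norm v"
    by (intro order_trans[OF abs_inner_matrix_vector_le] mult_right_mono) auto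
  ultimately show ?thesis
    unfolding D matrix_vector_mult_diff_rdistrib inner_diff_left
    by (simp add: power2_eq_square algebra_simps)
qed

lemma hessian_symmetric:
  fixes f :: "real^'n \<Rightarrow> real" and g :: "real^'n \<Rightarrow> real^'n" and H :: "real^'n \<Rightarrow> real^'n^'n"
  assumes df: "\<forall>u. (f has_derivative (\<lambda>h. g u \<bullet> h)) (at u)"
    and dg: "\<forall>u. (g has_derivative (\<lambda>h. H u *v h)) (at u)"
    and lip: "\<forall>u v. mat_norm (H u - H v) \<le> L * norm (u - v)"
  shows "(H x *v u) \<bullet> v = (H x *v v) \<bullet> u"
proof -
  define K where "K = L * (norm u ^ 2 * norm v + norm u * norm v ^ 2)"
  have "K \<ge> 0" using lipschitz_hessian_const_nonneg[OF lip] by (simp add: K_def)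
  have scaled: "\<bar>(H x *v u) \<bullet> v - (H x *v v) \<bullet> u\<bar> \<le> 2 * K * s" if "s > 0" for s
  proof -
    define D where "D = f (x + s *\<^sub>R u + s *\<^sub>R v) - f (x + s *\<^sub>R u) - f (x + s *\<^sub>R v) + f x"
    have "\<bar>D - s\<^sup>2 * ((H x *v u) \<bullet> v)\<bar> \<le> s ^ 3 * K"
      using second_difference_hessian[OF df dg lip, of x "s *\<^sub>R u" "s *\<^sub>R v"] \<open>s > 0\<close>
      by (simp add: D_def K_def matrix_vector_mult_scaleR power2_eq_square power3_eq_cube algebra_simps)
    moreover have "\<bar>D - s\<^sup>2 * ((H x *v v) \<bullet> u)\<bar> \<le> s ^ 3 * K"
      using second_difference_hessian[OF df dg lip, of x "s *\<^sub>R v" "s *\<^sub>R u"] \<open>s > 0\<close>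
      by (simp add: D_def K_def matrix_vector_mult_scaleR power2_eq_square power3_eq_cube algebra_simps)
    ultimately have "\<bar>s\<^sup>2 * ((H x *v u) \<bullet> v - (H x *v v) \<bullet> u)\<bar> \<le> 2 * (s ^ 3 * K)"
      unfolding right_diff_distrib by linarith
    also have "\<dots> = s\<^sup>2 * (2 * K * s)"
      by (simp add: power2_eq_square power3_eq_cube)
    finally show ?thesis using \<open>s > 0\<close> by (simp add: abs_mult)
  qed
  have "\<bar>(H x *v u) \<bullet> v - (H x *v v) \<bullet> u\<bar> \<le> 0"
  proof (rule field_le_epsilon)
    fix e :: real
    assume "e > 0"
    have "2 * K * (e / (2 * K + 1)) \<le> e"
      using \<open>K \<ge> 0\<close> \<open>e > 0\<close> by (simp add: field_simps)
    then show "\<bar>(H x *v u) \<bullet> v - (H x *v v) \<bullet> u\<bar> \<le> 0 + e"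
      using scaled[of "e / (2 * K + 1)"] \<open>K \<ge> 0\<close> \<open>e > 0\<close> by simp
  qed
  then show ?thesis by simp
qed

lemma taylor_lipschitz_hessian:
  fixes f :: "real^'n \<Rightarrow> real" and g :: "real^'n \<Rightarrow> real^'n" and H :: "real^'n \<Rightarrow> real^'n^'n"
  assumes df: "\<forall>u. (f has_derivative (\<lambda>h. g u \<bullet> h)) (at u)"
    and dg: "\<forall>u. (g has_derivative (\<lambda>h. H u *v h)) (at u)"
    and lip: "\<forall>u v. mat_norm (H u - H v) \<le> L * norm (u - v)"
  shows "\<bar>f (x + h) - f x - g x \<bullet> h - (1/2) * ((H x *v h) \<bullet> h)\<bar> \<le> L * norm h ^ 3"
proof -
  define c where "c = (H x *v h) \<bullet> h"
  define \<phi> where "\<phi> t = f (x + t *\<^sub>R h) - t * (g x \<bullet> h) - (1/2) * (t\<^sup>2 * c)" for t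
  have \<phi>': "(\<phi> has_real_derivative g (x + t *\<^sub>R h) \<bullet> h - g x \<bullet> h - t * c) (at t)" for t
    unfolding \<phi>_def
    by (intro DERIV_diff has_real_derivative_along_line[OF df])
       (auto intro!: derivative_eq_intros)
  obtain \<tau> where \<tau>: "0 < \<tau>" "\<tau> < 1"
    and "\<phi> 1 - \<phi> 0 = g (x + \<tau> *\<^sub>R h) \<bullet> h - g x \<bullet> h - \<tau> * c"
    using MVT2[of 0 1 \<phi>, OF _ \<phi>'] by auto
  then have "\<bar>f (x + h) - f x - g x \<bullet> h - (1/2) * c\<bar>
      = \<bar>g (x + \<tau> *\<^sub>R h) \<bullet> h - g x \<bullet> h - (H x *v (\<tau> *\<^sub>R h)) \<bullet> h\<bar>"
    by (simp add: \<phi>_def c_def matrix_vector_mult_scaleR)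
  also have "\<dots> \<le> L * norm (\<tau> *\<^sub>R h) ^ 2 * norm h"
    by (rule gradient_taylor_lipschitz_hessian[OF dg lip])
  also have "\<dots> = \<tau>\<^sup>2 * (L * norm h ^ 3)"
    using \<tau> by (simp add: power2_eq_square power3_eq_cube)
  also have "\<dots> \<le> L * norm h ^ 3"
    using \<tau> lipschitz_hessian_const_nonneg[OF lip]
    by (intro mult_left_le_one_le) (auto simp: power_le_one)
  finally show ?thesis by (simp add: c_def)
qed

lemma newton_step_interpolation_residual:
  fixes f :: "real^'n \<Rightarrow> real" and g :: "real^'n \<Rightarrow> real^'n" and H :: "real^'n \<Rightarrow> real^'n^'n"
  assumes df: "\<forall>u. (f has_derivative (\<lambda>h. g u \<bullet> h)) (at u)"
    and dg: "\<forall>u. (g has_derivative (\<lambda>h. H u *v h)) (at u)"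
    and lip: "\<forall>u v. mat_norm (H u - H v) \<le> L * norm (u - v)"
    and "invertible (H x)"
  shows "\<bar>(H x *v h) \<bullet> - (matrix_inv (H x) *v g x) - (- f (x + h) + f x + (1/2) * (h \<bullet> (H x *v h)))\<bar>
          \<le> L * norm h ^ 3"
proof -
  have "(H x *v h) \<bullet> (matrix_inv (H x) *v g x) = (H x *v (matrix_inv (H x) *v g x)) \<bullet> h"
    by (rule hessian_symmetric[OF df dg lip])
  also have "\<dots> = g x \<bullet> h"
    by (simp add: matrix_vector_mul_assoc matrix_mul_matrix_inv[OF assms(4)])
  finally show ?thesis
    using taylor_lipschitz_hessian[OF df dg lip, of x h] by (simp add: inner_commute[of h])
qed

lemma newton_step_least_squares_error:
  fixes f :: "real^'n \<Rightarrow> real" and g :: "real^'n \<Rightarrow> real^'n" and H :: "real^'n \<Rightarrow> real^'n^'n"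
    and y :: "'p::finite \<Rightarrow> real^'n"
  assumes df: "\<forall>u. (f has_derivative (\<lambda>h. g u \<bullet> h)) (at u)"
    and dg: "\<forall>u. (g has_derivative (\<lambda>h. H u *v h)) (at u)"
    and lip: "\<forall>u v. mat_norm (H u - H v) \<le> L * norm (u - v)"
    and inv: "invertible (H x)"
  defines "z \<equiv> \<lambda>l. H x *v (y l - x)"
  defines "\<Delta>y \<equiv> Max ((\<lambda>l. norm (y l - x)) ` UNIV)"
    and "\<Delta>z \<equiv> Max ((\<lambda>l. norm (z l)) ` UNIV)"
  defines "M \<equiv> (\<chi> l. (1 / \<Delta>z) *\<^sub>R z l) :: real^'n^'p"
    and "Z \<equiv> (\<chi> l. z l) :: real^'n^'p"
    and "b \<equiv> (\<chi> l. - f (y l) + f x + (1/2) * ((y l - x) \<bullet> z l)) :: real^'p"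
  assumes rank: "rank M = CARD('n)"
    and \<Lambda>z: "mat_norm (left_inverse M) \<le> \<Lambda>z"
    and least_squares: "\<forall>d. norm (Z *v dN - b) \<le> norm (Z *v d - b)"
  shows "norm (- (matrix_inv (H x) *v g x) - dN) \<le> \<Lambda>z * (2 * real CARD('p) * L * \<Delta>y ^ 3 / \<Delta>z)"
proof -
  define dS where "dS = - (matrix_inv (H x) *v g x)"
  have M_eq: "M = (1 / \<Delta>z) *\<^sub>R Z"
    by (simp add: M_def Z_def vec_eq_iff)
  have "\<Delta>z \<noteq> 0"
    using rank by (auto simp: M_eq)
  moreover have "\<Delta>z \<ge> 0"
    unfolding \<Delta>z_def by (rule order_trans[OF norm_ge_zero Max_ge]) auto
  ultimately have "\<Delta>z > 0" by simp
  have residual: "\<bar>(Z *v dS - b) $ l\<bar> \<le> L * \<Delta>y ^ 3" for l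
  proof -
    have "\<bar>(Z *v dS - b) $ l\<bar> \<le> L * norm (y l - x) ^ 3"
      using newton_step_interpolation_residual[OF df dg lip inv, of "y l - x"]
      by (simp add: Z_def b_def z_def dS_def matrix_vector_mult_def inner_vec_def mult_ac inner_commute)
    also have "\<dots> \<le> L * \<Delta>y ^ 3"
      unfolding \<Delta>y_def using lipschitz_hessian_const_nonneg[OF lip]
      by (intro mult_left_mono power_mono Max_ge) auto
    finally show ?thesis .
  qed
  then have residual_norm: "norm (Z *v dS - b) \<le> real CARD('p) * (L * \<Delta>y ^ 3)"
    by (rule norm_le_card_mult_cart)
  have scaled_residual: "M *v d - (1 / \<Delta>z) *\<^sub>R b = (1 / \<Delta>z) *\<^sub>R (Z *v d - b)" for d
    by (simp add: M_eq scaleR_matrix_vector_assoc[symmetric] scaleR_diff_right)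
  have "norm (dS - dN) \<le> 2 * mat_norm (left_inverse M) * norm (M *v dS - (1 / \<Delta>z) *\<^sub>R b)"
    using least_squares \<open>\<Delta>z > 0\<close>
    by (intro least_squares_error_le[OF rank]) (simp add: scaled_residual divide_right_mono)
  also have "\<dots> \<le> 2 * \<Lambda>z * (real CARD('p) * (L * \<Delta>y ^ 3) / \<Delta>z)"
    using \<Lambda>z order_trans[OF mat_norm_nonneg \<Lambda>z] residual_norm \<open>\<Delta>z > 0\<close>
    by (intro mult_mono) (auto simp: scaled_residual divide_right_mono mat_norm_nonneg)
  finally show ?thesis by (simp add: dS_def mult_ac)
qed

theorem theorem4:
  fixes L :: real
  assumes "CARD('p) \<ge> CARD('n)"
  shows "\<exists>C::real. \<forall>(f :: real^'n \<Rightarrow> real) (g :: real^'n \<Rightarrow> real^'n)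
            (H :: real^'n \<Rightarrow> real^'n^'n) (x :: real^'n) (y :: 'p \<Rightarrow> real^'n)
            (\<Lambda>z :: real) (dN :: real^'n).
     (\<forall>u. (f has_derivative (\<lambda>h. g u \<bullet> h)) (at u)) \<longrightarrow>
     (\<forall>u. (g has_derivative (\<lambda>h. H u *v h)) (at u)) \<longrightarrow>
     continuous_on UNIV H \<longrightarrow>
     (\<forall>u v. mat_norm (H u - H v) \<le> L * norm (u - v)) \<longrightarrow>
     invertible (H x) \<longrightarrow>
     (let z = (\<lambda>l. H x *v (y l - x));
          \<Delta>y = Max ((\<lambda>l. norm (y l - x)) ` UNIV);
          \<Delta>z = Max ((\<lambda>l. norm (z l)) ` UNIV);
          M = (\<chi> l. (1 / \<Delta>z) *\<^sub>R z l) :: real^'n^'p;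
          Z = (\<chi> l. z l) :: real^'n^'p;
          b = (\<chi> l. - f (y l) + f x + (1/2) * ((y l - x) \<bullet> z l)) :: real^'p
      in rank M = CARD('n) \<and>
         mat_norm (left_inverse M) \<le> \<Lambda>z \<and>
         (\<forall>d. norm (Z *v dN - b) \<le> norm (Z *v d - b))
         \<longrightarrow> norm (- (matrix_inv (H x) *v g x) - dN) \<le> \<Lambda>z * (C * \<Delta>y ^ 3 / \<Delta>z))"
  by (intro exI[of _ "2 * real CARD('p) * L"] allI impI, unfold Let_def, intro impI, elim conjE)
     (rule newton_step_least_squares_error)

end
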